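(* Let $X$ be a Banach space, $P$ a metric space with a flow $\theta$, $\lambda_0\in\mathbb{R}$, and for $\lambda$ in an open interval around $\lambda_0$ let $\varphi_\lambda$ be cocycle semiflows on $X$ over the same base flow $\theta$ on $P$. Assume: (H1) $P$ is compact; (H2) for every $T>0$ and every compact $B\subset X$, $\lim_{\lambda\to\lambda_0}\|\varphi_\lambda(t,p)x-\varphi_{\lambda_0}(t,p)x\|=0$ uniformly in $(t,x)\in[0,T]\times B$ and $p\in P$. Let $A_{\lambda_0}(\cdot)=\{A_{\lambda_0}(p)\}_{p\in P}$ be a pullback attractor of $\varphi_{\lambda_0}$ which pullback attracts a neighborhood $U(\cdot)$ of itself, and set $\mathbb{U}=\bigcup_{p\in P}U(p)\times\{p\}$, $\mathbb{A}_{\lambda_0}=\overline{\bigcup_{p\in P}A_{\lambda_0}(p)\times\{p\}}$. Assume $\mathbb{U}$ is a compact neighborhood of $\mathbb{A}_{\lambda_0}$ in $Y=X\times P$. Then: (a) there exists $\delta>0$ such that for each $\lambda\in(\lambda_0-\delta,\lambda_0+\delta)$, $\varphi_\lambda$ has a pullback attractor $A_\lambda(\cdot)$, and for each $p\in P$, $\lim_{\lambda\to\lambda_0}H_X\big(A_\lambda(p),\bigcup_{q\in P}A_{\lambda_0}(q)\big)=0$; (b) if in addition $U(\cdot)$ is forward invariant under $\varphi_{\lambda_0}$, then for each $p\in P$, $\lim_{\lambda\to\lambda_0}H_X(A_\lambda(p),A_{\lambda_0}(p))=0$.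
   Context: A cocycle semiflow over a flow $\theta$ on $P$ is a continuous map $\varphi:\mathbb{R}^+\times P\times X\to X$ with $\varphi(0,p)x=x$, $\varphi(t+s,p)x=\varphi(t,\theta_sp)\varphi(s,p)x$. A nonautonomous set $B(\cdot)$ is a family $\{B(p)\}_{p\in P}$ of subsets of $X$; it is compact if each $B(p)$ is compact; $U(\cdot)$ is a neighborhood of $B(\cdot)$ if $\overline{B(p)}\subset\mathrm{int}\,U(p)$ for every $p$; it is invariant (resp. forward invariant) if $\varphi(t,p)B(p)=B(\theta_tp)$ (resp. $\subset$) for all $t\ge0,p\in P$. $B(\cdot)$ pullback attracts $C(\cdot)$ if $\lim_{t\to\infty}H_X(\varphi(t,\theta_{-t}p)C(\theta_{-t}p),B(p))=0$ for every $p$, where $H_X(M,N)=\sup_{x\in M}\inf_{y\in N}\|x-y\|$. A (local) pullback attractor is a compact invariant nonautonomous set that pullback attracts some neighborhood of itself. *)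

theory Defs
  imports "HOL-Analysis.Analysis"
begin

definition is_flow :: "(real \<Rightarrow> 'p::topological_space \<Rightarrow> 'p) \<Rightarrow> bool" where
  "is_flow \<theta> \<longleftrightarrow> continuous_on UNIV (\<lambda>(t, p). \<theta> t p)
      \<and> (\<forall>p. \<theta> 0 p = p) \<and> (\<forall>t s p. \<theta> (t + s) p = \<theta> t (\<theta> s p))"

text \<open>Cocycle semiflow phi over theta; phi t p x stands for phi(t,p)x, only t >= 0 matters.\<close>
definition cocycle_semiflow ::
  "(real \<Rightarrow> 'p::topological_space \<Rightarrow> 'x::topological_space \<Rightarrow> 'x) \<Rightarrow> (real \<Rightarrow> 'p \<Rightarrow> 'p) \<Rightarrow> bool" where
  "cocycle_semiflow \<phi> \<theta> \<longleftrightarrow> continuous_on ({0..} \<times> UNIV \<times> UNIV) (\<lambda>(t, p, x). \<phi> t p x)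
      \<and> (\<forall>p x. \<phi> 0 p x = x)
      \<and> (\<forall>t s p x. 0 \<le> t \<longrightarrow> 0 \<le> s \<longrightarrow> \<phi> (t + s) p x = \<phi> t (\<theta> s p) (\<phi> s p x))"

text \<open>Hausdorff semi-distance H_X(M,N) = sup_{x in M} inf_{y in N} ||x - y||, valued in [0,\<infinity>]
  (sup over the empty set is 0, inf over the empty set is \<infinity>).\<close>
definition hsemi :: "'x::real_normed_vector set \<Rightarrow> 'x set \<Rightarrow> ennreal" where
  "hsemi M N = (SUP x\<in>M. INF y\<in>N. ennreal (norm (x - y)))"

definition na_compact :: "('p \<Rightarrow> 'x::topological_space set) \<Rightarrow> bool" where
  "na_compact B \<longleftrightarrow> (\<forall>p. compact (B p) \<and> B p \<noteq> {})"

definition na_neighborhood :: "('p \<Rightarrow> 'x::topological_space set) \<Rightarrow> ('p \<Rightarrow> 'x set) \<Rightarrow> bool" where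
  "na_neighborhood U B \<longleftrightarrow> (\<forall>p. closure (B p) \<subseteq> interior (U p))"

definition na_invariant ::
  "(real \<Rightarrow> 'p \<Rightarrow> 'x \<Rightarrow> 'x) \<Rightarrow> (real \<Rightarrow> 'p \<Rightarrow> 'p) \<Rightarrow> ('p \<Rightarrow> 'x set) \<Rightarrow> bool" where
  "na_invariant \<phi> \<theta> B \<longleftrightarrow> (\<forall>t p. 0 \<le> t \<longrightarrow> \<phi> t p ` B p = B (\<theta> t p))"

definition na_forward_invariant ::
  "(real \<Rightarrow> 'p \<Rightarrow> 'x \<Rightarrow> 'x) \<Rightarrow> (real \<Rightarrow> 'p \<Rightarrow> 'p) \<Rightarrow> ('p \<Rightarrow> 'x set) \<Rightarrow> bool" where
  "na_forward_invariant \<phi> \<theta> B \<longleftrightarrow> (\<forall>t p. 0 \<le> t \<longrightarrow> \<phi> t p ` B p \<subseteq> B (\<theta> t p))"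

definition pullback_attracts ::
  "(real \<Rightarrow> 'p \<Rightarrow> 'x::real_normed_vector \<Rightarrow> 'x) \<Rightarrow> (real \<Rightarrow> 'p \<Rightarrow> 'p) \<Rightarrow> ('p \<Rightarrow> 'x set) \<Rightarrow> ('p \<Rightarrow> 'x set) \<Rightarrow> bool" where
  "pullback_attracts \<phi> \<theta> B C \<longleftrightarrow>
     (\<forall>p. ((\<lambda>t. hsemi (\<phi> t (\<theta> (-t) p) ` C (\<theta> (-t) p)) (B p)) \<longlongrightarrow> 0) at_top)"

definition pullback_attractor ::
  "(real \<Rightarrow> 'p \<Rightarrow> 'x::real_normed_vector \<Rightarrow> 'x) \<Rightarrow> (real \<Rightarrow> 'p \<Rightarrow> 'p) \<Rightarrow> ('p \<Rightarrow> 'x set) \<Rightarrow> bool" where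
  "pullback_attractor \<phi> \<theta> A \<longleftrightarrow> na_compact A \<and> na_invariant \<phi> \<theta> A
     \<and> (\<exists>U. na_neighborhood U A \<and> pullback_attracts \<phi> \<theta> A U)"

end

theory Submission
  imports Defs
begin

text \<open>
  Pass to the skew product \<open>\<pi>\<^sub>\<lambda>(t, (x, p)) = (\<phi>\<^sub>\<lambda>(t, p) x, \<theta>\<^sub>t p)\<close>, an autonomous semiflow on
  \<open>X \<times> P\<close>. The graph \<open>G\<close> of \<open>A\<^sub>\<lambda>\<^sub>0\<close> is \<open>\<pi>\<^sub>\<lambda>\<^sub>0\<close>-invariant, lies in the interior of the compact
  graph \<open>K\<close> of \<open>U\<close>, and, because \<open>A\<^sub>\<lambda>\<^sub>0\<close> pullback attracts \<open>U\<close>, contains every point lying in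
  \<open>\<pi>\<^sub>\<lambda>\<^sub>0(s) K\<close> for all \<open>s \<ge> 0\<close>. A compactness argument then makes \<open>G\<close> uniformly attracting:
  for some \<open>r, T > 0\<close> the closed \<open>r\<close>-neighborhood \<open>N\<close> of \<open>G\<close> lies in \<open>K\<close> and is mapped into the
  \<open>r/2\<close>-neighborhood of \<open>G\<close> at all times \<open>\<ge> T\<close>. As \<open>\<phi>\<^sub>\<lambda> \<rightarrow> \<phi>\<^sub>\<lambda>\<^sub>0\<close> uniformly on \<open>[0, 2T] \<times> K\<close>,
  for \<open>\<lambda>\<close> near \<open>\<lambda>\<^sub>0\<close> the map \<open>\<pi>\<^sub>\<lambda>(t)\<close> sends \<open>N\<close> into the \<open>3r/4\<close>-neighborhood of \<open>G\<close> for
  \<open>t \<in> [T, 2T]\<close>, hence by the semigroup law for all \<open>t \<ge> T\<close>. The pullback \<open>\<omega>\<close>-limit set of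
  the fibres of \<open>N\<close> is then a pullback attractor \<open>A\<^sub>\<lambda> \<subseteq> U\<close>. Finally, every \<open>a \<in> A\<^sub>\<lambda>(p)\<close> is
  \<open>\<phi>\<^sub>\<lambda>(t, \<theta>\<^sub>-\<^sub>t p) b\<close> with \<open>b \<in> U(\<theta>\<^sub>-\<^sub>t p)\<close>, which is close to \<open>\<phi>\<^sub>\<lambda>\<^sub>0(t, \<theta>\<^sub>-\<^sub>t p) b\<close>, which for
  large \<open>t\<close> is close to \<open>A\<^sub>\<lambda>\<^sub>0(p)\<close>; this gives upper semicontinuity at \<open>\<lambda>\<^sub>0\<close>.
\<close>

lemma compact_nest_atLeast:
  fixes C :: "'i::linorder \<Rightarrow> 'a::t2_space set"
  assumes "\<And>s. T \<le> s \<Longrightarrow> compact (C s)" "\<And>s. T \<le> s \<Longrightarrow> C s \<noteq> {}"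
    and "\<And>s s'. T \<le> s \<Longrightarrow> s \<le> s' \<Longrightarrow> C s' \<subseteq> C s"
  shows "(\<Inter>s\<in>{T..}. C s) \<noteq> {}"
proof -
  have "C T \<inter> \<Inter>(C ` {T..}) \<noteq> {}"
  proof (rule compact_imp_fip)
    show "compact (C T)" using assms(1) by simp
    fix S assume "S \<in> C ` {T..}"
    then show "closed S" using assms(1) compact_imp_closed by auto
  next
    fix F assume "finite F" "F \<subseteq> C ` {T..}"
    then obtain S where S: "S \<subseteq> {T..}" "finite S" "F = C ` S" by (meson finite_subset_image)
    define m where "m = Max (insert T S)"
    have m: "T \<le> m" "\<And>s. s \<in> insert T S \<Longrightarrow> s \<le> m" using S unfolding m_def by auto
    have "C m \<subseteq> C s" if "s \<in> insert T S" for s using that S m assms(3)[of s m] by auto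
    then have "C m \<subseteq> C T \<inter> \<Inter>F" using S by auto
    then show "C T \<inter> \<Inter>F \<noteq> {}" using assms(2)[OF m(1)] by blast
  qed
  then show ?thesis by auto
qed

lemma infdist_lessE:
  assumes "infdist x A < e" "A \<noteq> {}"
  obtains a where "a \<in> A" "dist x a < e"
  using assms by (auto simp: infdist_notempty cINF_less_iff)

lemma closed_subset_compact: "compact K \<Longrightarrow> closed S \<Longrightarrow> S \<subseteq> K \<Longrightarrow> compact S"
  using compact_Int_closed[of K S] by (simp add: Int_absorb1)

lemma image_closure_compact:
  fixes f :: "'a::metric_space \<Rightarrow> 'b::metric_space"
  assumes "continuous_on UNIV f" "compact (closure S)"
  shows "f ` closure S = closure (f ` S)"
proof
  show "f ` closure S \<subseteq> closure (f ` S)"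
    by (rule image_closure_subset) (auto intro: continuous_on_subset[OF assms(1)] closure_subset[THEN subsetD])
  have "closed (f ` closure S)"
    by (intro compact_imp_closed compact_continuous_image continuous_on_subset[OF assms(1)] assms(2)) simp
  then show "closure (f ` S) \<subseteq> f ` closure S"
    by (rule closure_minimal[rotated]) (use closure_subset in blast)
qed

lemma compact_fibre:
  assumes "compact (N :: ('x::metric_space \<times> 'p::metric_space) set)"
  shows "compact {x. (x, p) \<in> N}"
proof -
  have "{x. (x, p) \<in> N} = fst ` (N \<inter> (UNIV \<times> {p}))" by force
  moreover have "compact (N \<inter> (UNIV \<times> {p}))" by (rule compact_Int_closed[OF assms]) (simp add: closed_Times)
  ultimately show ?thesis by (auto intro!: compact_continuous_image continuous_intros)
qed

lemma hsemi_le_ennrealI: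
  assumes "\<And>x. x \<in> M \<Longrightarrow> \<exists>y\<in>N. norm (x - y) \<le> e"
  shows "hsemi M N \<le> ennreal e"
  unfolding hsemi_def
proof (rule SUP_least)
  fix x assume "x \<in> M"
  then obtain y where "y \<in> N" "norm (x - y) \<le> e" using assms by blast
  then have "(INF y\<in>N. ennreal (norm (x - y))) \<le> ennreal (norm (x - y))" by (intro INF_lower)
  also have "\<dots> \<le> ennreal e" using \<open>norm (x - y) \<le> e\<close> by (rule ennreal_leI)
  finally show "(INF y\<in>N. ennreal (norm (x - y))) \<le> ennreal e" .
qed

lemma hsemi_lessD:
  assumes "hsemi M N < ennreal e" "x \<in> M"
  shows "\<exists>y\<in>N. norm (x - y) < e"
proof -
  have "(INF y\<in>N. ennreal (norm (x - y))) < ennreal e"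
    using assms unfolding hsemi_def by (meson SUP_upper order.strict_trans1)
  then obtain y where "y \<in> N" "ennreal (norm (x - y)) < ennreal e" by (auto simp: INF_less_iff)
  then show ?thesis by (auto simp: ennreal_less_iff)
qed

lemma hsemi_anti_mono_right:
  assumes "N \<subseteq> N'"
  shows "hsemi M N' \<le> hsemi M N"
  unfolding hsemi_def using assms by (intro SUP_mono' INF_superset_mono) auto

lemma hsemi_tendsto_zeroI:
  assumes "\<And>e. e > 0 \<Longrightarrow> eventually (\<lambda>i. \<forall>x\<in>M i. \<exists>y\<in>N i. norm (x - y) \<le> e) F"
  shows "((\<lambda>i. hsemi (M i) (N i)) \<longlongrightarrow> 0) F"
proof (rule order_tendstoI)
  fix a :: ennreal assume "0 < a"
  obtain e :: real where e: "e > 0" "ennreal e < a"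
  proof (cases "a = \<infinity>")
    case True
    then show ?thesis using that[of 1] by simp
  next
    case False
    then obtain b where "a = ennreal b" "b > 0" using \<open>0 < a\<close> by (cases a) auto
    then show ?thesis using that[of "b / 2"] by (simp add: ennreal_lessI)
  qed
  show "eventually (\<lambda>i. hsemi (M i) (N i) < a) F"
    using assms[OF e(1)]
  proof eventually_elim
    case (elim i)
    then have "hsemi (M i) (N i) \<le> ennreal e" by (intro hsemi_le_ennrealI) blast
    then show ?case using e(2) by simp
  qed
qed simp

lemma pullback_attractsD:
  assumes "pullback_attracts \<phi> \<theta> A U" "e > 0"
  obtains t\<^sub>0 where "\<And>t x. t\<^sub>0 \<le> t \<Longrightarrow> x \<in> U (\<theta> (- t) p) \<Longrightarrow> \<exists>y\<in>A p. norm (\<phi> t (\<theta> (- t) p) x - y) < e"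
proof -
  have "((\<lambda>t. hsemi (\<phi> t (\<theta> (- t) p) ` U (\<theta> (- t) p)) (A p)) \<longlongrightarrow> 0) at_top"
    using assms(1) unfolding pullback_attracts_def by blast
  then have "eventually (\<lambda>t. hsemi (\<phi> t (\<theta> (- t) p) ` U (\<theta> (- t) p)) (A p) < ennreal e) at_top"
    by (rule order_tendstoD) (use assms(2) in simp)
  then obtain t\<^sub>0 where
      "\<And>t. t\<^sub>0 \<le> t \<Longrightarrow> hsemi (\<phi> t (\<theta> (- t) p) ` U (\<theta> (- t) p)) (A p) < ennreal e"
    unfolding eventually_at_top_linorder by blast
  then show ?thesis by (intro that[of t\<^sub>0]) (auto intro: hsemi_lessD)
qed



section \<open>Semiflows and skew products\<close>

lemma flow_comp:
  assumes "is_flow \<theta>"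
  shows "\<theta> t (\<theta> s p) = \<theta> (t + s) p"
  using assms unfolding is_flow_def by metis

lemma flow_inverse:
  assumes "is_flow \<theta>"
  shows "\<theta> t (\<theta> (- t) p) = p" "\<theta> (- t) (\<theta> t p) = p"
  using assms unfolding is_flow_def by (metis add.right_inverse add.left_inverse)+

lemma continuous_on_cocycle:
  assumes "cocycle_semiflow \<phi> \<theta>" "0 \<le> t"
  shows "continuous_on UNIV (\<phi> t p)"
proof -
  have joint: "continuous_on ({0..} \<times> UNIV \<times> UNIV) (\<lambda>(t, p, x). \<phi> t p x)"
    using assms(1) unfolding cocycle_semiflow_def by blast
  have "continuous_on UNIV ((\<lambda>(t, p, x). \<phi> t p x) \<circ> (\<lambda>x. (t, p, x)))"
    by (rule continuous_on_compose) (auto intro!: continuous_intros intro: continuous_on_subset[OF joint] simp: assms(2))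
  then show ?thesis by (simp add: o_def)
qed

lemma cocycle_add:
  "cocycle_semiflow \<phi> \<theta> \<Longrightarrow> 0 \<le> t \<Longrightarrow> 0 \<le> s \<Longrightarrow> \<phi> (t + s) p x = \<phi> t (\<theta> s p) (\<phi> s p x)"
  unfolding cocycle_semiflow_def by blast

definition semiflow :: "(real \<Rightarrow> 'a::topological_space \<Rightarrow> 'a) \<Rightarrow> bool" where
  "semiflow \<pi> \<longleftrightarrow> continuous_on ({0..} \<times> UNIV) (\<lambda>(t, y). \<pi> t y) \<and> (\<forall>y. \<pi> 0 y = y)
      \<and> (\<forall>t s y. 0 \<le> t \<longrightarrow> 0 \<le> s \<longrightarrow> \<pi> (t + s) y = \<pi> t (\<pi> s y))"

lemma semiflow_zero: "semiflow \<pi> \<Longrightarrow> \<pi> 0 y = y"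
  unfolding semiflow_def by blast

lemma semiflow_add: "semiflow \<pi> \<Longrightarrow> 0 \<le> t \<Longrightarrow> 0 \<le> s \<Longrightarrow> \<pi> (t + s) y = \<pi> t (\<pi> s y)"
  unfolding semiflow_def by blast

lemma semiflow_continuous_on: "semiflow \<pi> \<Longrightarrow> continuous_on ({0..} \<times> UNIV) (\<lambda>(t, y). \<pi> t y)"
  unfolding semiflow_def by blast

lemma continuous_on_semiflow:
  assumes "semiflow \<pi>" "0 \<le> t"
  shows "continuous_on UNIV (\<pi> t)"
proof -
  have "continuous_on UNIV ((\<lambda>(t, y). \<pi> t y) \<circ> (\<lambda>y. (t, y)))"
    by (rule continuous_on_compose) (auto intro!: continuous_intros
        intro: continuous_on_subset[OF semiflow_continuous_on[OF assms(1)]] simp: assms(2))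
  then show ?thesis by (simp add: o_def)
qed

definition skew_product ::
  "(real \<Rightarrow> 'p \<Rightarrow> 'x \<Rightarrow> 'x) \<Rightarrow> (real \<Rightarrow> 'p \<Rightarrow> 'p) \<Rightarrow> real \<Rightarrow> 'x \<times> 'p \<Rightarrow> 'x \<times> 'p" where
  "skew_product \<phi> \<theta> t = (\<lambda>(x, p). (\<phi> t p x, \<theta> t p))"

lemma skew_product_apply [simp]: "skew_product \<phi> \<theta> t (x, p) = (\<phi> t p x, \<theta> t p)"
  by (simp add: skew_product_def)

lemma semiflow_skew_product:
  assumes flow: "is_flow \<theta>" and cocycle: "cocycle_semiflow \<phi> \<theta>"
  shows "semiflow (skew_product \<phi> \<theta>)"
proof -
  have \<phi>: "continuous_on ({0..} \<times> UNIV \<times> UNIV) (\<lambda>(t, p, x). \<phi> t p x)"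
    using cocycle unfolding cocycle_semiflow_def by blast
  have \<theta>: "continuous_on UNIV (\<lambda>(t, p). \<theta> t p)"
    using flow unfolding is_flow_def by blast
  have "continuous_on ({0..} \<times> UNIV) ((\<lambda>(t, p, x). \<phi> t p x) \<circ> (\<lambda>ty. (fst ty, snd (snd ty), fst (snd ty))))"
    by (rule continuous_on_compose) (auto intro!: continuous_intros intro: continuous_on_subset[OF \<phi>])
  moreover have "continuous_on ({0..} \<times> UNIV) ((\<lambda>(t, p). \<theta> t p) \<circ> (\<lambda>ty. (fst ty, snd (snd ty))))"
    by (rule continuous_on_compose) (auto intro!: continuous_intros intro: continuous_on_subset[OF \<theta>])
  ultimately have "continuous_on ({0..} \<times> UNIV) (\<lambda>(t, y). skew_product \<phi> \<theta> t y)"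
    by (auto simp: skew_product_def case_prod_beta o_def intro: continuous_on_Pair)
  moreover have "skew_product \<phi> \<theta> 0 y = y" "skew_product \<phi> \<theta> (t + s) y = skew_product \<phi> \<theta> t (skew_product \<phi> \<theta> s y)"
    if "0 \<le> t" "0 \<le> s" for t s y
    using flow cocycle that unfolding is_flow_def cocycle_semiflow_def by (auto simp: skew_product_def split: prod.split)
  ultimately show ?thesis unfolding semiflow_def by blast
qed

section \<open>Pullback \<open>\<omega>\<close>-limit sets of absorbing families\<close>

locale pullback_absorbing =
  fixes \<phi> :: "real \<Rightarrow> 'p::metric_space \<Rightarrow> 'x::real_normed_vector \<Rightarrow> 'x" and \<theta> :: "real \<Rightarrow> 'p \<Rightarrow> 'p"
    and B C :: "'p \<Rightarrow> 'x set" and T :: real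
  assumes flow: "is_flow \<theta>" and cocycle: "cocycle_semiflow \<phi> \<theta>"
    and compact_B: "\<And>p. compact (B p)" and B_nonempty: "\<And>p. B p \<noteq> {}"
    and closed_C: "\<And>p. closed (C p)" and C_subset: "\<And>p. C p \<subseteq> interior (B p)"
    and T_nonneg: "0 \<le> T" and absorbing: "\<And>t p. T \<le> t \<Longrightarrow> \<phi> t p ` B p \<subseteq> C (\<theta> t p)"
begin

definition trail :: "real \<Rightarrow> 'p \<Rightarrow> 'x set" where
  "trail s p = (\<Union>t\<in>{s..}. \<phi> t (\<theta> (- t) p) ` B (\<theta> (- t) p))"

text \<open>Starting the intersection at the absorption time \<open>T\<close> keeps every closure inside the
  compact fibre \<open>C p \<subseteq> B p\<close>.\<close>

definition omega_limit :: "'p \<Rightarrow> 'x set" where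
  "omega_limit p = (\<Inter>s\<in>{T..}. closure (trail s p))"

lemma closure_trail_subset:
  assumes "T \<le> s"
  shows "closure (trail s p) \<subseteq> C p"
proof (rule closure_minimal[OF _ closed_C])
  show "trail s p \<subseteq> C p"
    unfolding trail_def
  proof (rule UN_least)
    fix t assume "t \<in> {s..}"
    then show "\<phi> t (\<theta> (- t) p) ` B (\<theta> (- t) p) \<subseteq> C p"
      using absorbing[of t "\<theta> (- t) p"] assms flow_inverse(1)[OF flow] by simp
  qed
qed

lemma compact_closure_trail: "T \<le> s \<Longrightarrow> compact (closure (trail s p))"
  using closure_trail_subset C_subset interior_subset
  by (intro closed_subset_compact[OF compact_B closed_closure]) blast

lemma trail_antimono: "s \<le> s' \<Longrightarrow> trail s' p \<subseteq> trail s p"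
  unfolding trail_def by (intro UN_mono) auto

lemma trail_nonempty: "trail s p \<noteq> {}"
  using B_nonempty unfolding trail_def by (auto intro: bexI[of _ "max s 0"])

lemma Inter_closure_trail_nonempty:
  assumes "\<And>s. T \<le> s \<Longrightarrow> closed (D s)" "\<And>s. T \<le> s \<Longrightarrow> closure (trail s p) \<inter> D s \<noteq> {}"
    and "\<And>s s'. T \<le> s \<Longrightarrow> s \<le> s' \<Longrightarrow> D s' \<subseteq> D s"
  shows "(\<Inter>s\<in>{T..}. closure (trail s p) \<inter> D s) \<noteq> {}"
proof (rule compact_nest_atLeast)
  show "compact (closure (trail s p) \<inter> D s)" if "T \<le> s" for s
    using that assms(1) compact_closure_trail by (blast intro: compact_Int_closed)
  show "closure (trail s' p) \<inter> D s' \<subseteq> closure (trail s p) \<inter> D s" if "T \<le> s" "s \<le> s'" for s s'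
    using that assms(3) closure_mono[OF trail_antimono] by blast
qed (use assms(2) in blast)

lemma omega_limit_nonempty: "omega_limit p \<noteq> {}"
  using Inter_closure_trail_nonempty[of "\<lambda>_. UNIV" p] trail_nonempty by (simp add: omega_limit_def)

lemma omega_limit_subset: "omega_limit p \<subseteq> C p"
  using closure_trail_subset[of T p] unfolding omega_limit_def by auto

lemma compact_omega_limit: "compact (omega_limit p)"
  unfolding omega_limit_def
  by (rule closed_subset_compact[OF compact_closure_trail[of T]]) auto

lemma image_trail:
  assumes "0 \<le> s" "0 \<le> \<tau>"
  shows "\<phi> \<tau> p ` trail s p = trail (\<tau> + s) (\<theta> \<tau> p)"
proof -
  define F where "F q t = \<phi> t (\<theta> (- t) q) ` B (\<theta> (- t) q)" for q t
  have trail_F: "trail s q = (\<Union>t\<in>{s..}. F q t)" for s q unfolding trail_def F_def ..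
  have step: "\<phi> \<tau> p ` F p t = F (\<theta> \<tau> p) (\<tau> + t)" if "s \<le> t" for t
  proof -
    have "\<theta> (- (\<tau> + t)) (\<theta> \<tau> p) = \<theta> (- t) p" using flow_comp[OF flow] by simp
    moreover have "\<phi> (\<tau> + t) (\<theta> (- t) p) x = \<phi> \<tau> p (\<phi> t (\<theta> (- t) p) x)" for x
      using cocycle_add[OF cocycle assms(2), of t] that assms flow_inverse(1)[OF flow] by simp
    ultimately show ?thesis unfolding F_def by (simp add: image_image)
  qed
  have "\<phi> \<tau> p ` trail s p = (\<Union>t\<in>{s..}. \<phi> \<tau> p ` F p t)"
    unfolding trail_F by (rule image_UN)
  also have "\<dots> = (\<Union>t\<in>{s..}. F (\<theta> \<tau> p) (\<tau> + t))"
    by (rule SUP_cong[OF refl]) (simp add: step)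
  also have "\<dots> = trail (\<tau> + s) (\<theta> \<tau> p)"
    unfolding trail_F by (metis image_add_atLeast image_image)
  finally show ?thesis .
qed

lemma image_closure_trail:
  assumes "T \<le> s" "0 \<le> \<tau>"
  shows "\<phi> \<tau> p ` closure (trail s p) = closure (trail (\<tau> + s) (\<theta> \<tau> p))"
  using image_closure_compact[OF continuous_on_cocycle[OF cocycle assms(2)] compact_closure_trail[OF assms(1)]]
    image_trail assms T_nonneg by simp

lemma image_omega_limit_subset:
  assumes "0 \<le> \<tau>"
  shows "\<phi> \<tau> p ` omega_limit p \<subseteq> omega_limit (\<theta> \<tau> p)"
proof -
  have "\<phi> \<tau> p ` omega_limit p \<subseteq> closure (trail s (\<theta> \<tau> p))" if "T \<le> s" for s
  proof -
    have "omega_limit p \<subseteq> closure (trail s p)" unfolding omega_limit_def using that by blast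
    then have "\<phi> \<tau> p ` omega_limit p \<subseteq> \<phi> \<tau> p ` closure (trail s p)" by (rule image_mono)
    also have "\<dots> = closure (trail (\<tau> + s) (\<theta> \<tau> p))" by (rule image_closure_trail[OF that assms])
    also have "\<dots> \<subseteq> closure (trail s (\<theta> \<tau> p))"
      using assms by (intro closure_mono trail_antimono) simp
    finally show ?thesis .
  qed
  then show ?thesis unfolding omega_limit_def by (rule INF_greatest) simp
qed

lemma omega_limit_subset_image:
  assumes "0 \<le> \<tau>"
  shows "omega_limit (\<theta> \<tau> p) \<subseteq> \<phi> \<tau> p ` omega_limit p"
proof
  fix y assume y: "y \<in> omega_limit (\<theta> \<tau> p)"
  have "closed (\<phi> \<tau> p -` {y})"
    using continuous_on_closed_vimage[of UNIV "\<phi> \<tau> p"] continuous_on_cocycle[OF cocycle assms] by simp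
  moreover have "closure (trail s p) \<inter> \<phi> \<tau> p -` {y} \<noteq> {}" if s: "T \<le> s" for s
  proof -
    have "T \<le> \<tau> + s" using s assms by simp
    then have "y \<in> closure (trail (\<tau> + s) (\<theta> \<tau> p))"
      using INT_D[OF y[unfolded omega_limit_def]] by simp
    then obtain x where "x \<in> closure (trail s p)" "\<phi> \<tau> p x = y"
      unfolding image_closure_trail[OF s assms, symmetric] by blast
    then show ?thesis by blast
  qed
  ultimately obtain x where "x \<in> (\<Inter>s\<in>{T..}. closure (trail s p) \<inter> \<phi> \<tau> p -` {y})"
    using Inter_closure_trail_nonempty[of "\<lambda>_. \<phi> \<tau> p -` {y}" p] by blast
  then show "y \<in> \<phi> \<tau> p ` omega_limit p" unfolding omega_limit_def by auto
qed

lemma omega_limit_invariant: "na_invariant \<phi> \<theta> omega_limit"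
  unfolding na_invariant_def using image_omega_limit_subset omega_limit_subset_image by blast

lemma omega_limit_attracts: "pullback_attracts \<phi> \<theta> omega_limit B"
  unfolding pullback_attracts_def
proof (intro allI hsemi_tendsto_zeroI)
  fix p and e :: real assume e: "e > 0"
  let ?far = "{x. e \<le> infdist x (omega_limit p)}"
  have "\<not> (\<forall>s\<ge>T. closure (trail s p) \<inter> ?far \<noteq> {})"
  proof
    assume "\<forall>s\<ge>T. closure (trail s p) \<inter> ?far \<noteq> {}"
    moreover have "closed ?far"
      by (intro closed_Collect_le continuous_intros continuous_on_infdist continuous_on_id)
    ultimately obtain x where "x \<in> (\<Inter>s\<in>{T..}. closure (trail s p) \<inter> ?far)"
      using Inter_closure_trail_nonempty[of "\<lambda>_. ?far" p] by blast
    then have "x \<in> omega_limit p" "e \<le> infdist x (omega_limit p)" unfolding omega_limit_def by auto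
    then show False using e by simp
  qed
  then obtain s where "T \<le> s" and near: "\<And>x. x \<in> trail s p \<Longrightarrow> infdist x (omega_limit p) < e"
    using closure_subset by fastforce
  show "eventually (\<lambda>t. \<forall>x\<in>\<phi> t (\<theta> (- t) p) ` B (\<theta> (- t) p). \<exists>y\<in>omega_limit p. norm (x - y) \<le> e) at_top"
    unfolding eventually_at_top_linorder
  proof (intro exI allI impI ballI)
    fix t x assume "s \<le> t" "x \<in> \<phi> t (\<theta> (- t) p) ` B (\<theta> (- t) p)"
    then have "infdist x (omega_limit p) < e" by (intro near) (auto simp: trail_def)
    then obtain y where "y \<in> omega_limit p" "dist x y < e"
      using omega_limit_nonempty by (auto simp: infdist_notempty cINF_less_iff)
    then show "\<exists>y\<in>omega_limit p. norm (x - y) \<le> e" by (auto simp: dist_norm intro: less_imp_le)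
  qed
qed

theorem pullback_attractor_omega_limit: "pullback_attractor \<phi> \<theta> omega_limit"
proof -
  have "na_neighborhood B omega_limit"
    unfolding na_neighborhood_def
    using omega_limit_subset C_subset compact_omega_limit by (simp add: compact_imp_closed) blast
  then show ?thesis
    unfolding pullback_attractor_def na_compact_def
    using compact_omega_limit omega_limit_nonempty omega_limit_invariant omega_limit_attracts by blast
qed

end

section \<open>Uniformly attracting invariant sets of semiflows\<close>

lemma semiflow_uniformly_continuous:
  assumes "semiflow \<pi>" "compact K" "\<epsilon> > 0"
  obtains d where "d > 0"
    "\<And>t t' y y'. t \<in> {0..S} \<Longrightarrow> t' \<in> {0..S} \<Longrightarrow> y \<in> K \<Longrightarrow> y' \<in> K \<Longrightarrow> dist (t, y) (t', y') < d
       \<Longrightarrow> dist (\<pi> t y) (\<pi> t' y') < \<epsilon>"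
proof -
  have "uniformly_continuous_on ({0..S} \<times> K) (\<lambda>(t, y). \<pi> t y)"
    by (intro compact_uniformly_continuous continuous_on_subset[OF semiflow_continuous_on[OF assms(1)]]
        compact_Times assms(2)) auto
  then obtain d where "d > 0" "\<And>u u'. u \<in> {0..S} \<times> K \<Longrightarrow> u' \<in> {0..S} \<times> K \<Longrightarrow> dist u' u < d
      \<Longrightarrow> dist ((\<lambda>(t, y). \<pi> t y) u') ((\<lambda>(t, y). \<pi> t y) u) < \<epsilon>"
    using assms(3) unfolding uniformly_continuous_on_def by metis
  then show ?thesis by (intro that[of d]) (auto simp: dist_commute)
qed

definition stays_in :: "(real \<Rightarrow> 'a \<Rightarrow> 'a) \<Rightarrow> 'a set \<Rightarrow> real \<Rightarrow> 'a set" where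
  "stays_in \<pi> K s = {y. \<forall>\<sigma>\<in>{0..s}. \<pi> \<sigma> y \<in> K}"

locale attracting_invariant_set =
  fixes \<pi> :: "real \<Rightarrow> 'a::metric_space \<Rightarrow> 'a" and K M :: "'a set"
  assumes semiflow: "semiflow \<pi>" and compact_K: "compact K"
    and M_nonempty: "M \<noteq> {}" and M_interior: "M \<subseteq> interior K"
    and M_invariant: "\<And>t. 0 \<le> t \<Longrightarrow> \<pi> t ` M = M"
    and limits_in_M: "\<And>z. (\<And>s. 0 \<le> s \<Longrightarrow> z \<in> \<pi> s ` K) \<Longrightarrow> z \<in> M"
begin

definition reached :: "real \<Rightarrow> 'a set" where
  "reached s = \<pi> s ` stays_in \<pi> K s"

lemma stays_in_subset:
  assumes "0 \<le> s"
  shows "stays_in \<pi> K s \<subseteq> K"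
proof
  fix y assume "y \<in> stays_in \<pi> K s"
  then have "\<pi> 0 y \<in> K" using assms unfolding stays_in_def by auto
  then show "y \<in> K" by (simp add: semiflow_zero[OF semiflow])
qed

lemma compact_reached:
  assumes "0 \<le> s"
  shows "compact (reached s)"
proof -
  have "closed (\<pi> \<sigma> -` K)" if "0 \<le> \<sigma>" for \<sigma>
    using continuous_on_closed_vimage[of UNIV "\<pi> \<sigma>"] continuous_on_semiflow[OF semiflow that]
      compact_imp_closed[OF compact_K] by simp
  moreover have "stays_in \<pi> K s = (\<Inter>\<sigma>\<in>{0..s}. \<pi> \<sigma> -` K)"
    unfolding stays_in_def by auto
  ultimately have "closed (stays_in \<pi> K s)" by (auto intro!: closed_INT)
  then have "compact (stays_in \<pi> K s)"
    by (rule closed_subset_compact[OF compact_K _ stays_in_subset[OF assms]])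
  then show ?thesis
    unfolding reached_def
    by (rule compact_continuous_image[OF continuous_on_subset[OF continuous_on_semiflow[OF semiflow assms]], rotated]) simp
qed

lemma reached_memI:
  assumes "0 \<le> s" "s \<le> \<tau>" "y \<in> stays_in \<pi> K \<tau>"
  shows "\<pi> \<tau> y \<in> reached s"
proof -
  have "\<pi> \<sigma> (\<pi> (\<tau> - s) y) \<in> K" if "\<sigma> \<in> {0..s}" for \<sigma>
  proof -
    have "\<sigma> + (\<tau> - s) \<in> {0..\<tau>}" using assms that by auto
    then have "\<pi> (\<sigma> + (\<tau> - s)) y \<in> K" using assms(3) unfolding stays_in_def by blast
    then show ?thesis using semiflow_add[OF semiflow, of \<sigma> "\<tau> - s" y] assms that by simp
  qed
  then have "\<pi> (\<tau> - s) y \<in> stays_in \<pi> K s" unfolding stays_in_def by blast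
  moreover have "\<pi> s (\<pi> (\<tau> - s) y) = \<pi> \<tau> y"
    using semiflow_add[OF semiflow, of s "\<tau> - s" y] assms by simp
  ultimately show ?thesis unfolding reached_def by (metis image_eqI)
qed

lemma reached_antimono: "0 \<le> s \<Longrightarrow> s \<le> s' \<Longrightarrow> reached s' \<subseteq> reached s"
  unfolding reached_def by (auto intro: reached_memI[unfolded reached_def])

lemma M_subset_reached:
  assumes "0 \<le> s"
  shows "M \<subseteq> reached s"
proof
  fix z assume "z \<in> M"
  then obtain y where y: "y \<in> M" "z = \<pi> s y" using M_invariant[OF assms] by blast
  have "\<pi> \<sigma> y \<in> K" if "\<sigma> \<in> {0..s}" for \<sigma>
    using M_invariant[of \<sigma>] y(1) that M_interior interior_subset by fastforce
  then have "y \<in> stays_in \<pi> K s" unfolding stays_in_def by blast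
  then show "z \<in> reached s" unfolding reached_def y(2) by blast
qed

lemma M_eq_Inter_reached: "M = (\<Inter>s\<in>{0..}. reached s)"
proof (intro equalityI subsetI)
  fix z assume z: "z \<in> (\<Inter>s\<in>{0..}. reached s)"
  show "z \<in> M"
  proof (rule limits_in_M)
    fix s :: real assume "0 \<le> s"
    then have "z \<in> \<pi> s ` stays_in \<pi> K s" using z unfolding reached_def by blast
    then show "z \<in> \<pi> s ` K" using stays_in_subset[OF \<open>0 \<le> s\<close>] by blast
  qed
qed (use M_subset_reached in blast)

lemma compact_M: "compact M"
proof (rule closed_subset_compact[OF compact_reached[of 0]])
  show "closed M"
    unfolding M_eq_Inter_reached by (rule closed_INT) (simp add: compact_imp_closed compact_reached)
qed (use M_subset_reached in auto)

lemma reached_subset_open: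
  assumes "open V" "M \<subseteq> V"
  obtains s where "0 \<le> s" "reached s \<subseteq> V"
proof (rule ccontr)
  assume none: "\<not> thesis"
  have "(\<Inter>s\<in>{0..}. reached s - V) \<noteq> {}"
  proof (rule compact_nest_atLeast)
    fix s :: real assume s: "0 \<le> s"
    show "compact (reached s - V)" using compact_diff[OF compact_reached[OF s] assms(1)] .
    show "reached s - V \<noteq> {}" using none that s by blast
  next
    fix s s' :: real assume "0 \<le> s" "s \<le> s'"
    then show "reached s' - V \<subseteq> reached s - V" using reached_antimono by blast
  qed
  then obtain z where z: "z \<in> (\<Inter>s\<in>{0..}. reached s - V)" by blast
  then have "z \<in> (\<Inter>s\<in>{0..}. reached s)" "z \<notin> V" by auto
  then show False using M_eq_Inter_reached assms(2) by blast
qed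

lemma infdist_neighborhood_subset_K:
  obtains e where "e > 0" "\<And>y. infdist y M < e \<Longrightarrow> y \<in> K"
proof -
  obtain e where e: "e > 0" "(\<Union>x\<in>M. ball x e) \<subseteq> interior K"
    using compact_subset_open_imp_ball_epsilon_subset[OF compact_M open_interior M_interior] by blast
  have "y \<in> K" if y: "infdist y M < e" for y
  proof -
    obtain a where "a \<in> M" "dist y a < e" using infdist_lessE[OF y M_nonempty] .
    then have "y \<in> interior K" using e(2) by (force simp: dist_commute)
    then show ?thesis using interior_subset by blast
  qed
  then show thesis using e(1) that by blast
qed

lemma reached_subset_infdist_less:
  assumes "c > 0"
  obtains s where "0 \<le> s" "reached s \<subseteq> {y. infdist y M < c}"
proof (rule reached_subset_open)
  show "open {y. infdist y M < c}"
    by (intro open_Collect_less continuous_intros continuous_on_infdist continuous_on_id)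
qed (use assms in auto)

text \<open>Lyapunov stability of \<open>M\<close>: as long as an orbit stays in \<open>K\<close> it is close to \<open>M\<close>, by
  continuity for short times and because \<open>reached\<close> shrinks onto \<open>M\<close> for long times; so it can be
  continued in \<open>K\<close> by steps of a fixed length.\<close>
lemma orbits_near_M_stay_in_K:
  obtains r where "r > 0" "\<And>y \<tau>. infdist y M \<le> r \<Longrightarrow> y \<in> stays_in \<pi> K \<tau>"
proof -
  obtain e where e: "e > 0" and inK: "\<And>y. infdist y M < e \<Longrightarrow> y \<in> K"
    by (rule infdist_neighborhood_subset_K) blast
  define \<rho> where "\<rho> = e / 2"
  have \<rho>: "0 < \<rho>" "2 * \<rho> = e" using e by (auto simp: \<rho>_def)
  obtain s\<^sub>0 where s\<^sub>0: "0 \<le> s\<^sub>0" "reached s\<^sub>0 \<subseteq> {y. infdist y M < \<rho>}"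
    by (rule reached_subset_infdist_less[OF \<rho>(1)])
  obtain d where d: "d > 0" and uc: "\<And>t t' y y'. t \<in> {0..s\<^sub>0 + 1} \<Longrightarrow> t' \<in> {0..s\<^sub>0 + 1} \<Longrightarrow> y \<in> K
      \<Longrightarrow> y' \<in> K \<Longrightarrow> dist (t, y) (t', y') < d \<Longrightarrow> dist (\<pi> t y) (\<pi> t' y') < \<rho>"
    by (rule semiflow_uniformly_continuous[OF semiflow compact_K \<rho>(1), where S = "s\<^sub>0 + 1"]) blast
  define r where "r = min \<rho> (d / 2)"
  have r: "0 < r" "r < e" "r < d" using \<rho> d by (auto simp: r_def)
  have near: "infdist (\<pi> \<tau> w) M < \<rho>"
    if w: "infdist w M \<le> r" "0 \<le> \<tau>" "w \<in> stays_in \<pi> K \<tau>" for w \<tau>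
  proof (cases "\<tau> \<le> s\<^sub>0")
    case True
    obtain a where a: "a \<in> M" "dist w a < d" using infdist_lessE[of w M d] w(1) r M_nonempty by force
    have "w \<in> K" "a \<in> K" using inK w(1) r a(1) M_interior interior_subset by auto
    then have "dist (\<pi> \<tau> w) (\<pi> \<tau> a) < \<rho>"
      using True w(2) a(2) by (intro uc) (auto simp: dist_Pair_Pair)
    moreover have "\<pi> \<tau> a \<in> M" using M_invariant[OF w(2)] a(1) by blast
    ultimately show ?thesis using infdist_le[of "\<pi> \<tau> a" M "\<pi> \<tau> w"] by linarith
  next
    case False
    then have "\<pi> \<tau> w \<in> reached s\<^sub>0" using s\<^sub>0(1) w by (intro reached_memI) auto
    then show ?thesis using s\<^sub>0(2) by blast
  qed
  define h where "h = min 1 (d / 2)"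
  have h: "0 < h" "h \<le> 1" "h < d" using d by (auto simp: h_def)
  have steps: "w \<in> stays_in \<pi> K (real n * h)" if w: "infdist w M \<le> r" for w n
  proof (induction n)
    case 0
    show ?case using inK[of w] w r semiflow_zero[OF semiflow] by (simp add: stays_in_def)
  next
    case (Suc n)
    have "\<pi> \<sigma> w \<in> K" if \<sigma>: "\<sigma> \<in> {real n * h..real (Suc n) * h}" for \<sigma>
    proof -
      define z where "z = \<pi> (real n * h) w"
      have "infdist z M < \<rho>" unfolding z_def using near[OF w _ Suc.IH] h by simp
      then have zK: "z \<in> K" using inK \<rho> by simp
      have "\<pi> \<sigma> w = \<pi> (\<sigma> - real n * h) z"
        using semiflow_add[OF semiflow, of "\<sigma> - real n * h" "real n * h" w] \<sigma> h by (simp add: z_def)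
      moreover have "dist (\<pi> (\<sigma> - real n * h) z) (\<pi> 0 z) < \<rho>"
        using \<sigma> h s\<^sub>0(1) zK by (intro uc) (auto simp: dist_Pair_Pair dist_real_def algebra_simps)
      ultimately have "dist (\<pi> \<sigma> w) z < \<rho>" by (simp add: semiflow_zero[OF semiflow])
      then have "infdist (\<pi> \<sigma> w) M < e"
        using infdist_triangle[of "\<pi> \<sigma> w" M z] \<open>infdist z M < \<rho>\<close> \<rho> by simp
      then show ?thesis by (rule inK)
    qed
    moreover have "\<pi> \<sigma> w \<in> K" if "\<sigma> \<in> {0..real n * h}" for \<sigma>
      using Suc.IH that unfolding stays_in_def by blast
    ultimately have "\<pi> \<sigma> w \<in> K" if "\<sigma> \<in> {0..real (Suc n) * h}" for \<sigma>
      using that by (cases "\<sigma> \<le> real n * h") auto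
    then show ?case unfolding stays_in_def by blast
  qed
  have "w \<in> stays_in \<pi> K \<tau>" if "infdist w M \<le> r" for w \<tau>
  proof -
    obtain n :: nat where "\<tau> / h \<le> real n" using real_arch_simple by blast
    then have "\<tau> \<le> real n * h" using h by (simp add: field_simps)
    then show ?thesis using steps[OF that, of n] unfolding stays_in_def by auto
  qed
  with r(1) show thesis by (rule that)
qed

theorem uniformly_attracting:
  obtains r T where "r > 0" "T > 0" "\<And>y. infdist y M \<le> r \<Longrightarrow> y \<in> K"
    "\<And>y \<tau>. infdist y M \<le> r \<Longrightarrow> T \<le> \<tau> \<Longrightarrow> infdist (\<pi> \<tau> y) M < r / 2"
proof -
  obtain r where r: "r > 0" and stays: "\<And>y \<tau>. infdist y M \<le> r \<Longrightarrow> y \<in> stays_in \<pi> K \<tau>"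
    by (rule orbits_near_M_stay_in_K) blast
  obtain s where s: "0 \<le> s" "reached s \<subseteq> {y. infdist y M < r / 2}"
    by (rule reached_subset_infdist_less[of "r / 2"]) (use r in simp)
  show thesis
  proof (rule that[of r "max s 1"])
    show "y \<in> K" if "infdist y M \<le> r" for y
      using stays[OF that, of 0] stays_in_subset by blast
    show "infdist (\<pi> \<tau> y) M < r / 2" if "infdist y M \<le> r" "max s 1 \<le> \<tau>" for y \<tau>
      using reached_memI[OF s(1) _ stays[OF that(1)]] s(2) that(2) by fastforce
  qed (use r in auto)
qed

end

section \<open>Perturbation of pullback attractors\<close>

lemma skew_product_image_graph:
  assumes flow: "is_flow \<theta>" and invariant: "na_invariant \<phi> \<theta> A" and "0 \<le> t"
  shows "skew_product \<phi> \<theta> t ` {(x, p). x \<in> A p} = {(x, p). x \<in> A p}"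
proof (intro equalityI subsetI)
  fix z assume "z \<in> skew_product \<phi> \<theta> t ` {(x, p). x \<in> A p}"
  then obtain x p where "z = (\<phi> t p x, \<theta> t p)" "x \<in> A p" by auto
  then show "z \<in> {(x, p). x \<in> A p}" using invariant assms(3) unfolding na_invariant_def by auto
next
  fix z assume "z \<in> {(x, p). x \<in> A p}"
  then obtain x q where z: "z = (x, q)" "x \<in> A q" by auto
  have "A q = \<phi> t (\<theta> (- t) q) ` A (\<theta> (- t) q)"
    using invariant assms(3) flow_inverse(1)[OF flow] unfolding na_invariant_def by metis
  then obtain y where "y \<in> A (\<theta> (- t) q)" "x = \<phi> t (\<theta> (- t) q) y" using z(2) by blast
  then show "z \<in> skew_product \<phi> \<theta> t ` {(x, p). x \<in> A p}"
    using z(1) flow_inverse(1)[OF flow] by (auto intro!: image_eqI[of _ _ "(y, \<theta> (- t) q)"])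
qed

lemma graph_contains_skew_product_limits:
  assumes flow: "is_flow \<theta>" and attracts: "pullback_attracts \<phi> \<theta> A U" and closed: "closed (A q)"
    and limit: "\<And>s. 0 \<le> s \<Longrightarrow> (\<xi>, q) \<in> skew_product \<phi> \<theta> s ` {(x, p). x \<in> U p}"
  shows "\<xi> \<in> A q"
proof -
  have "\<exists>a\<in>A q. dist a \<xi> < e" if e: "e > 0" for e
  proof -
    obtain t\<^sub>0 where t\<^sub>0: "\<And>t x. t\<^sub>0 \<le> t \<Longrightarrow> x \<in> U (\<theta> (- t) q) \<Longrightarrow> \<exists>a\<in>A q. norm (\<phi> t (\<theta> (- t) q) x - a) < e"
      using pullback_attractsD[OF attracts e] by blast
    define s where "s = max t\<^sub>0 0"
    obtain y p where "y \<in> U p" "(\<xi>, q) = (\<phi> s p y, \<theta> s p)" using limit[of s] by (auto simp: s_def)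
    moreover from this have "p = \<theta> (- s) q" using flow_inverse(2)[OF flow] by auto
    ultimately obtain a where "a \<in> A q" "norm (\<xi> - a) < e" using t\<^sub>0[of s y] by (auto simp: s_def)
    then show ?thesis by (auto simp: dist_norm norm_minus_commute)
  qed
  then have "\<xi> \<in> closure (A q)" unfolding closure_approachable by blast
  then show ?thesis using closed by simp
qed

lemma semiflow_absorbing_window:
  assumes "semiflow \<pi>" "T > 0" "S' \<subseteq> S" and window: "\<And>y \<tau>. y \<in> S \<Longrightarrow> T \<le> \<tau> \<Longrightarrow> \<tau> \<le> 2 * T \<Longrightarrow> \<pi> \<tau> y \<in> S'"
    and "y \<in> S" "T \<le> \<tau>"
  shows "\<pi> \<tau> y \<in> S'"
proof -
  have "\<forall>y\<in>S. \<forall>\<tau>. T \<le> \<tau> \<and> \<tau> \<le> (real n + 2) * T \<longrightarrow> \<pi> \<tau> y \<in> S'" for n :: nat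
  proof (induction n)
    case 0
    show ?case using window by simp
  next
    case (Suc n)
    show ?case
    proof (intro ballI allI impI)
      fix y \<tau> assume y: "y \<in> S" and \<tau>: "T \<le> \<tau> \<and> \<tau> \<le> (real (Suc n) + 2) * T"
      show "\<pi> \<tau> y \<in> S'"
      proof (cases "\<tau> \<le> (real n + 2) * T")
        case True
        then show ?thesis using Suc.IH y \<tau> by blast
      next
        case False
        have "\<pi> T y \<in> S" using window[OF y order_refl] assms(2,3) by auto
        moreover have "T \<le> \<tau> - T" "\<tau> - T \<le> (real n + 2) * T"
        proof -
          have "(real n + 2) * T = real n * T + 2 * T" by (simp add: algebra_simps)
          moreover have "\<tau> \<le> real n * T + 3 * T" using conjunct2[OF \<tau>] by (simp add: algebra_simps)
          moreover have "0 \<le> real n * T" using assms(2) by simp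
          ultimately show "T \<le> \<tau> - T" "\<tau> - T \<le> (real n + 2) * T" using False by linarith+
        qed
        ultimately have "\<pi> (\<tau> - T) (\<pi> T y) \<in> S'" using Suc.IH by blast
        then show ?thesis using semiflow_add[OF assms(1), of "\<tau> - T" T y] \<tau> assms(2) by simp
      qed
    qed
  qed
  moreover obtain n :: nat where "\<tau> / T \<le> real n" using real_arch_simple by blast
  then have "\<tau> \<le> (real n + 2) * T" using assms(2) by (simp add: field_simps)
  ultimately show ?thesis using assms(5,6) by blast
qed

lemma perturbed_semiflow_absorbing:
  fixes \<pi> \<pi>' :: "real \<Rightarrow> 'a::metric_space \<Rightarrow> 'a"
  assumes "semiflow \<pi>'" "T > 0" "r > 0"
    and attracting: "\<And>y \<tau>. infdist y M \<le> r \<Longrightarrow> T \<le> \<tau> \<Longrightarrow> infdist (\<pi> \<tau> y) M < r / 2"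
    and close: "\<And>y \<tau>. infdist y M \<le> r \<Longrightarrow> T \<le> \<tau> \<Longrightarrow> \<tau> \<le> 2 * T \<Longrightarrow> dist (\<pi>' \<tau> y) (\<pi> \<tau> y) < r / 4"
    and "infdist y M \<le> r" "T \<le> \<tau>"
  shows "infdist (\<pi>' \<tau> y) M \<le> 3 * r / 4"
proof -
  have "infdist (\<pi>' \<tau> y) M \<le> 3 * r / 4"
    if "infdist y M \<le> r" "T \<le> \<tau>" "\<tau> \<le> 2 * T" for y \<tau>
    using infdist_triangle[of "\<pi>' \<tau> y" M "\<pi> \<tau> y"] attracting[OF that(1,2)] close[OF that] by simp
  moreover have "{y. infdist y M \<le> 3 * r / 4} \<subseteq> {y. infdist y M \<le> r}" using assms(3) by auto
  ultimately show ?thesis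
    using semiflow_absorbing_window[of \<pi>' T "{y. infdist y M \<le> 3 * r / 4}" "{y. infdist y M \<le> r}"] assms
    by simp
qed

lemma pullback_attractors_upper_semicontinuous:
  fixes \<phi> :: "'l \<Rightarrow> real \<Rightarrow> 'p::metric_space \<Rightarrow> 'x::real_normed_vector \<Rightarrow> 'x"
  assumes flow: "is_flow \<theta>" and attracts: "pullback_attracts \<phi>\<^sub>0 \<theta> A\<^sub>0 U"
    and eventually_attractor: "eventually (\<lambda>l. na_invariant (\<phi> l) \<theta> (A l) \<and> (\<forall>p. A l p \<subseteq> U p)) F"
    and converge: "\<And>t \<epsilon>. 0 < t \<Longrightarrow> 0 < \<epsilon> \<Longrightarrow>
      eventually (\<lambda>l. \<forall>q. \<forall>x\<in>U q. norm (\<phi> l t q x - \<phi>\<^sub>0 t q x) < \<epsilon>) F"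
  shows "((\<lambda>l. hsemi (A l p) (A\<^sub>0 p)) \<longlongrightarrow> 0) F"
proof (rule hsemi_tendsto_zeroI)
  fix \<epsilon> :: real assume \<epsilon>: "\<epsilon> > 0"
  obtain t\<^sub>0 where t\<^sub>0: "\<And>t x. t\<^sub>0 \<le> t \<Longrightarrow> x \<in> U (\<theta> (- t) p) \<Longrightarrow> \<exists>y\<in>A\<^sub>0 p. norm (\<phi>\<^sub>0 t (\<theta> (- t) p) x - y) < \<epsilon> / 2"
    using pullback_attractsD[OF attracts, of "\<epsilon> / 2"] \<epsilon> by auto
  define t where "t = max t\<^sub>0 1"
  define p' where "p' = \<theta> (- t) p"
  have t: "0 < t" "t\<^sub>0 \<le> t" unfolding t_def by auto
  have "0 < \<epsilon> / 2" using \<epsilon> by simp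
  show "eventually (\<lambda>l. \<forall>a\<in>A l p. \<exists>y\<in>A\<^sub>0 p. norm (a - y) \<le> \<epsilon>) F"
    using eventually_conj[OF eventually_attractor converge[OF t(1) \<open>0 < \<epsilon> / 2\<close>]]
  proof (elim eventually_mono, safe)
    fix l a
    assume inv: "na_invariant (\<phi> l) \<theta> (A l)" and AU: "\<forall>p. A l p \<subseteq> U p"
      and close: "\<forall>q. \<forall>x\<in>U q. norm (\<phi> l t q x - \<phi>\<^sub>0 t q x) < \<epsilon> / 2"
      and a: "a \<in> A l p"
    have "A l p = \<phi> l t p' ` A l p'"
      using inv t(1) flow_inverse(1)[OF flow] unfolding na_invariant_def p'_def by simp
    then obtain b where b: "b \<in> U p'" "a = \<phi> l t p' b" using a AU by blast
    then obtain y where y: "y \<in> A\<^sub>0 p" "norm (\<phi>\<^sub>0 t p' b - y) < \<epsilon> / 2"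
      using t\<^sub>0[OF t(2), of b] by (auto simp: p'_def)
    have "norm (a - y) \<le> norm (a - \<phi>\<^sub>0 t p' b) + norm (\<phi>\<^sub>0 t p' b - y)"
      by (rule norm_diff_triangle_le[OF order_refl order_refl])
    also have "\<dots> < \<epsilon>" using close b y by force
    finally show "\<exists>y\<in>A\<^sub>0 p. norm (a - y) \<le> \<epsilon>" using y(1) by (auto intro: less_imp_le)
  qed
qed

lemma pullback_attractor_in_neighborhood:
  fixes \<phi> :: "real \<Rightarrow> 'p::metric_space \<Rightarrow> 'x::real_normed_vector \<Rightarrow> 'x"
  assumes flow: "is_flow \<theta>" and cocycle: "cocycle_semiflow \<phi> \<theta>"
    and K: "compact K" and r: "r > 0" and T: "0 \<le> T"
    and inK: "\<And>y. infdist y M \<le> r \<Longrightarrow> y \<in> K" and fibres: "\<And>p. \<exists>x. (x, p) \<in> M"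
    and absorbing: "\<And>y \<tau>. infdist y M \<le> r \<Longrightarrow> T \<le> \<tau> \<Longrightarrow> infdist (skew_product \<phi> \<theta> \<tau> y) M \<le> 3 * r / 4"
  obtains A where "pullback_attractor \<phi> \<theta> A" "\<And>p. A p \<subseteq> {x. (x, p) \<in> K}"
proof -
  define B where "B c p = {x. infdist (x, p) M \<le> c}" for c p
  have closed_B: "closed (B c p)" for c p
    unfolding B_def by (intro closed_Collect_le continuous_intros continuous_on_infdist)
  have BK: "B r p \<subseteq> {x. (x, p) \<in> K}" for p using inK unfolding B_def by auto
  interpret pullback_absorbing \<phi> \<theta> "B r" "B (3 * r / 4)" T
  proof
    show "compact (B r p)" for p by (rule closed_subset_compact[OF compact_fibre[OF K] closed_B BK])
    show "B r p \<noteq> {}" for p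
      using fibres[of p] unfolding B_def by (metis empty_iff infdist_zero less_imp_le mem_Collect_eq r)
    show "B (3 * r / 4) p \<subseteq> interior (B r p)" for p
    proof
      fix x assume x: "x \<in> B (3 * r / 4) p"
      have "ball x (r / 4) \<subseteq> B r p"
      proof
        fix y assume "y \<in> ball x (r / 4)"
        then have "dist (y, p) (x, p) < r / 4" by (simp add: dist_Pair_Pair dist_commute)
        then show "y \<in> B r p"
          using infdist_triangle[of "(y, p)" M "(x, p)"] x unfolding B_def by simp
      qed
      then show "x \<in> interior (B r p)" using r by (auto simp: mem_interior intro!: exI[of _ "r / 4"])
    qed
    show "\<phi> t p ` B r p \<subseteq> B (3 * r / 4) (\<theta> t p)" if "T \<le> t" for t p
      using absorbing[of "(_, p)" t] that unfolding B_def by auto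
  qed (use flow cocycle closed_B T in auto)
  show thesis
  proof (rule that[OF pullback_attractor_omega_limit])
    show "omega_limit p \<subseteq> {x. (x, p) \<in> K}" for p
      using omega_limit_subset[of p] BK[of p] r unfolding B_def by force
  qed
qed

lemma attracting_invariant_set_graph:
  fixes \<phi>\<^sub>0 :: "real \<Rightarrow> 'p::metric_space \<Rightarrow> 'x::real_normed_vector \<Rightarrow> 'x"
  assumes flow: "is_flow \<theta>" and cocycle\<^sub>0: "cocycle_semiflow \<phi>\<^sub>0 \<theta>"
    and A\<^sub>0_compact: "na_compact A\<^sub>0" and A\<^sub>0_inv: "na_invariant \<phi>\<^sub>0 \<theta> A\<^sub>0"
    and A\<^sub>0_attr: "pullback_attracts \<phi>\<^sub>0 \<theta> A\<^sub>0 U"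
    and UU_compact: "compact {(x, p). x \<in> U p}"
    and UU_nbhd: "closure {(x, p). x \<in> A\<^sub>0 p} \<subseteq> interior {(x, p). x \<in> U p}"
  shows "attracting_invariant_set (skew_product \<phi>\<^sub>0 \<theta>) {(x, p). x \<in> U p} {(x, p). x \<in> A\<^sub>0 p}"
proof
  show "semiflow (skew_product \<phi>\<^sub>0 \<theta>)" by (rule semiflow_skew_product[OF flow cocycle\<^sub>0])
  show "compact {(x, p). x \<in> U p}" by (rule UU_compact)
  obtain x where "x \<in> A\<^sub>0 undefined" using A\<^sub>0_compact unfolding na_compact_def by blast
  then show "{(x, p). x \<in> A\<^sub>0 p} \<noteq> {}" by blast
  show "{(x, p). x \<in> A\<^sub>0 p} \<subseteq> interior {(x, p). x \<in> U p}"
    using closure_subset UU_nbhd by (rule order_trans)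
  show "skew_product \<phi>\<^sub>0 \<theta> t ` {(x, p). x \<in> A\<^sub>0 p} = {(x, p). x \<in> A\<^sub>0 p}" if "0 \<le> t" for t
    by (rule skew_product_image_graph[OF flow A\<^sub>0_inv that])
  show "z \<in> {(x, p). x \<in> A\<^sub>0 p}"
    if limit: "\<And>s. 0 \<le> s \<Longrightarrow> z \<in> skew_product \<phi>\<^sub>0 \<theta> s ` {(x, p). x \<in> U p}" for z
  proof -
    obtain \<xi> q where z: "z = (\<xi>, q)" by (cases z)
    have "closed (A\<^sub>0 q)" using A\<^sub>0_compact unfolding na_compact_def by (simp add: compact_imp_closed)
    then have "\<xi> \<in> A\<^sub>0 q"
      using graph_contains_skew_product_limits[OF flow A\<^sub>0_attr] limit unfolding z by blast
    then show ?thesis unfolding z by simp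
  qed
qed

lemma eventually_pullback_attractor:
  fixes \<phi> :: "'l \<Rightarrow> real \<Rightarrow> 'p::metric_space \<Rightarrow> 'x::real_normed_vector \<Rightarrow> 'x"
  assumes flow: "is_flow \<theta>"
    and cocycle\<^sub>0: "cocycle_semiflow \<phi>\<^sub>0 \<theta>" and cocycle: "eventually (\<lambda>l. cocycle_semiflow (\<phi> l) \<theta>) F"
    and converge: "\<And>t B \<epsilon>. 0 < t \<Longrightarrow> compact B \<Longrightarrow> 0 < \<epsilon> \<Longrightarrow>
      eventually (\<lambda>l. \<forall>s\<in>{0..t}. \<forall>x\<in>B. \<forall>p. norm (\<phi> l s p x - \<phi>\<^sub>0 s p x) < \<epsilon>) F"
    and A\<^sub>0_compact: "na_compact A\<^sub>0" and A\<^sub>0_inv: "na_invariant \<phi>\<^sub>0 \<theta> A\<^sub>0"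
    and A\<^sub>0_attr: "pullback_attracts \<phi>\<^sub>0 \<theta> A\<^sub>0 U"
    and UU_compact: "compact {(x, p). x \<in> U p}"
    and UU_nbhd: "closure {(x, p). x \<in> A\<^sub>0 p} \<subseteq> interior {(x, p). x \<in> U p}"
  shows "eventually (\<lambda>l. \<exists>A. pullback_attractor (\<phi> l) \<theta> A \<and> (\<forall>p. A p \<subseteq> U p)) F"
proof -
  define K where "K = {(x, p). x \<in> U p}"
  define M where "M = {(x, p). x \<in> A\<^sub>0 p}"
  interpret attracting_invariant_set "skew_product \<phi>\<^sub>0 \<theta>" K M
    unfolding K_def M_def
    by (rule attracting_invariant_set_graph[OF flow cocycle\<^sub>0 A\<^sub>0_compact A\<^sub>0_inv A\<^sub>0_attr UU_compact UU_nbhd])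
  have fibres: "\<exists>x. (x, p) \<in> M" for p
    using A\<^sub>0_compact unfolding na_compact_def M_def by blast
  obtain r T where r: "r > 0" and T: "T > 0" and inK: "\<And>y. infdist y M \<le> r \<Longrightarrow> y \<in> K"
    and attracting: "\<And>y \<tau>. infdist y M \<le> r \<Longrightarrow> T \<le> \<tau> \<Longrightarrow> infdist (skew_product \<phi>\<^sub>0 \<theta> \<tau> y) M < r / 2"
    by (rule uniformly_attracting) blast
  have "compact (fst ` K)" by (intro compact_continuous_image continuous_intros) (simp add: K_def UU_compact)
  with T r have "eventually (\<lambda>l. cocycle_semiflow (\<phi> l) \<theta>
      \<and> (\<forall>s\<in>{0..2 * T}. \<forall>x\<in>fst ` K. \<forall>p. norm (\<phi> l s p x - \<phi>\<^sub>0 s p x) < r / 4)) F"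
    by (intro eventually_conj cocycle converge) auto
  then show ?thesis
  proof (rule eventually_mono, elim conjE)
    fix l assume cocycle_l: "cocycle_semiflow (\<phi> l) \<theta>"
      and close: "\<forall>s\<in>{0..2 * T}. \<forall>x\<in>fst ` K. \<forall>p. norm (\<phi> l s p x - \<phi>\<^sub>0 s p x) < r / 4"
    have near: "dist (skew_product (\<phi> l) \<theta> \<tau> y) (skew_product \<phi>\<^sub>0 \<theta> \<tau> y) < r / 4"
      if "infdist y M \<le> r" "T \<le> \<tau>" "\<tau> \<le> 2 * T" for y \<tau>
    proof -
      obtain x p where y: "y = (x, p)" by (cases y)
      have "x \<in> fst ` K" using inK[OF that(1)] unfolding y by force
      moreover have "\<tau> \<in> {0..2 * T}" using that T by simp
      ultimately have "norm (\<phi> l \<tau> p x - \<phi>\<^sub>0 \<tau> p x) < r / 4" using close by blast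
      then show ?thesis unfolding y by (simp add: dist_Pair_Pair dist_norm)
    qed
    have absorbing: "infdist (skew_product (\<phi> l) \<theta> \<tau> y) M \<le> 3 * r / 4"
      if "infdist y M \<le> r" "T \<le> \<tau>" for y \<tau>
      by (rule perturbed_semiflow_absorbing[where \<pi> = "skew_product \<phi>\<^sub>0 \<theta>",
            OF semiflow_skew_product[OF flow cocycle_l] T r attracting near that])
    obtain A where "pullback_attractor (\<phi> l) \<theta> A" "\<And>p. A p \<subseteq> {x. (x, p) \<in> K}"
      using pullback_attractor_in_neighborhood[OF flow cocycle_l compact_K r less_imp_le[OF T] inK
          fibres absorbing] by blast
    then show "\<exists>A. pullback_attractor (\<phi> l) \<theta> A \<and> (\<forall>p. A p \<subseteq> U p)" unfolding K_def by auto
  qed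
qed

theorem theorem3p1:
  fixes \<phi> :: "real \<Rightarrow> real \<Rightarrow> 'p::metric_space \<Rightarrow> 'x::banach \<Rightarrow> 'x"
    and \<theta> :: "real \<Rightarrow> 'p \<Rightarrow> 'p"
    and l\<^sub>0 :: real and I :: "real set"
    and A\<^sub>0 U :: "'p \<Rightarrow> 'x set"
  assumes flow: "is_flow \<theta>"
    and I: "open I" "l\<^sub>0 \<in> I" "is_interval I"
    and cocycle: "\<And>l. l \<in> I \<Longrightarrow> cocycle_semiflow (\<phi> l) \<theta>"
    and H1: "compact (UNIV :: 'p set)"
    and H2: "\<And>T B \<epsilon>. T > 0 \<Longrightarrow> compact B \<Longrightarrow> \<epsilon> > 0 \<Longrightarrow>
               \<exists>\<eta>>0. \<forall>l\<in>I. \<bar>l - l\<^sub>0\<bar> < \<eta> \<longrightarrow>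
                 (\<forall>t\<in>{0..T}. \<forall>x\<in>B. \<forall>p. norm (\<phi> l t p x - \<phi> l\<^sub>0 t p x) < \<epsilon>)"
    and A0_compact: "na_compact A\<^sub>0"
    and A0_inv: "na_invariant (\<phi> l\<^sub>0) \<theta> A\<^sub>0"
    and U_nbhd: "na_neighborhood U A\<^sub>0"
    and A0_attr: "pullback_attracts (\<phi> l\<^sub>0) \<theta> A\<^sub>0 U"
    and UU_compact: "compact {(x, p). x \<in> U p}"
    and UU_nbhd: "closure {(x, p). x \<in> A\<^sub>0 p} \<subseteq> interior {(x, p). x \<in> U p}"
  shows "\<exists>\<delta>>0. \<exists>A :: real \<Rightarrow> 'p \<Rightarrow> 'x set.
           (\<forall>l. \<bar>l - l\<^sub>0\<bar> < \<delta> \<longrightarrow> pullback_attractor (\<phi> l) \<theta> (A l))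
         \<and> (\<forall>p. ((\<lambda>l. hsemi (A l p) (\<Union>q. A\<^sub>0 q)) \<longlongrightarrow> 0) (at l\<^sub>0))
         \<and> (na_forward_invariant (\<phi> l\<^sub>0) \<theta> U \<longrightarrow>
              (\<forall>p. ((\<lambda>l. hsemi (A l p) (A\<^sub>0 p)) \<longlongrightarrow> 0) (at l\<^sub>0)))"
proof -
  have in_I: "eventually (\<lambda>l. l \<in> I) (nhds l\<^sub>0)" by (rule eventually_nhds_in_open[OF I(1,2)])
  have converge: "eventually (\<lambda>l. \<forall>s\<in>{0..t}. \<forall>x\<in>B. \<forall>p. norm (\<phi> l s p x - \<phi> l\<^sub>0 s p x) < \<epsilon>) (nhds l\<^sub>0)"
    if hyps: "0 < t" "compact B" "0 < \<epsilon>" for t B \<epsilon>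
  proof -
    obtain \<eta> where \<eta>: "\<eta> > 0"
      "\<forall>l\<in>I. \<bar>l - l\<^sub>0\<bar> < \<eta> \<longrightarrow> (\<forall>s\<in>{0..t}. \<forall>x\<in>B. \<forall>p. norm (\<phi> l s p x - \<phi> l\<^sub>0 s p x) < \<epsilon>)"
      using H2[OF hyps] by blast
    have "eventually (\<lambda>l. \<bar>l - l\<^sub>0\<bar> < \<eta>) (nhds l\<^sub>0)"
      using \<eta>(1) by (auto simp: eventually_nhds_metric dist_real_def)
    with in_I show ?thesis
    proof eventually_elim
      case (elim l)
      then show ?case using \<eta>(2) by blast
    qed
  qed
  have "eventually (\<lambda>l. \<exists>A. pullback_attractor (\<phi> l) \<theta> A \<and> (\<forall>p. A p \<subseteq> U p)) (nhds l\<^sub>0)"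
    using eventually_mono[OF in_I cocycle]
    by (rule eventually_pullback_attractor[OF flow cocycle[OF I(2)] _ converge
          A0_compact A0_inv A0_attr UU_compact UU_nbhd])
  then obtain \<delta> where \<delta>: "\<delta> > 0" and attractor:
      "\<And>l. \<bar>l - l\<^sub>0\<bar> < \<delta> \<Longrightarrow> \<exists>A. pullback_attractor (\<phi> l) \<theta> A \<and> (\<forall>p. A p \<subseteq> U p)"
    by (auto simp: eventually_nhds_metric dist_real_def)
  define A where "A l = (SOME A. pullback_attractor (\<phi> l) \<theta> A \<and> (\<forall>p. A p \<subseteq> U p))" for l
  have A: "pullback_attractor (\<phi> l) \<theta> (A l) \<and> (\<forall>p. A l p \<subseteq> U p)" if "\<bar>l - l\<^sub>0\<bar> < \<delta>" for l
    unfolding A_def using someI_ex[OF attractor[OF that]] .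
  have upper: "((\<lambda>l. hsemi (A l p) (A\<^sub>0 p)) \<longlongrightarrow> 0) (at l\<^sub>0)" for p
  proof (rule pullback_attractors_upper_semicontinuous[OF flow A0_attr])
    show "eventually (\<lambda>l. na_invariant (\<phi> l) \<theta> (A l) \<and> (\<forall>p. A l p \<subseteq> U p)) (at l\<^sub>0)"
      using A \<delta> by (auto simp: pullback_attractor_def eventually_at dist_real_def)
    have "compact (fst ` {(x, p). x \<in> U p})" by (intro compact_continuous_image continuous_intros UU_compact)
    then show "eventually (\<lambda>l. \<forall>q. \<forall>x\<in>U q. norm (\<phi> l t q x - \<phi> l\<^sub>0 t q x) < \<epsilon>) (at l\<^sub>0)"
      if "0 < t" "0 < \<epsilon>" for t \<epsilon>
      using converge[of t _ \<epsilon>] that unfolding eventually_nhds_conv_at by (fastforce elim!: eventually_mono)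
  qed
  have "((\<lambda>l. hsemi (A l p) (\<Union>q. A\<^sub>0 q)) \<longlongrightarrow> 0) (at l\<^sub>0)" for p
    by (rule tendsto_sandwich[OF _ _ tendsto_const upper[of p]])
       (auto intro!: always_eventually hsemi_anti_mono_right)
  then show ?thesis using \<delta> A upper by blast
qed

end
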